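(* Let $\{x^i\}_{i=1}^{n+1}$ and $\{y^i\}_{i=1}^{n+1}$ be two coordinate systems on open subsets of a manifold, related by a $C^2$ diffeomorphism $\phi$, and suppose a hypersurface is represented near a point both as the graph $x^{n+1}=f(x^1,\dots,x^n)$ and as the graph $y^{n+1}=g(y^1,\dots,y^n)$, with $f,g$ locally Lipschitz. If $\vec x_0=(x_0^1,\dots,x_0^n)$ is an Alexandrov point of $f$ and $(\vec y_0,g(\vec y_0))=\phi(\vec x_0,f(\vec x_0))$, then $\vec y_0$ is an Alexandrov point of $g$.
   Context: A point $x$ is an Alexandrov point of a function $f$ defined near $x$ in $\mathbb R^n$ if $f$ is differentiable at $x$ and there is a symmetric bilinear form $Q$ such that $f(y)-f(x)-df(x)(y-x)=Q(y-x,y-x)+o(|y-x|^2)$ as $y\to x$. The coordinate directions $\partial/\partial x^{n+1}$, $\partial/\partial y^{n+1}$ are not assumed to have any particular causal character. *)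

theory Defs
  imports "HOL-Analysis.Analysis"
begin

text \<open>Points of R^(n+1) are represented as pairs (x, t) with x in R^n = real^'n
  and t the (n+1)-st coordinate.\<close>

definition C1_on :: "'a::euclidean_space set \<Rightarrow> ('a \<Rightarrow> 'b::real_normed_vector) \<Rightarrow> bool" where
  "C1_on U h \<longleftrightarrow> (\<exists>D :: 'a \<Rightarrow> ('a \<Rightarrow>\<^sub>L 'b).
      (\<forall>x\<in>U. (h has_derivative blinfun_apply (D x)) (at x)) \<and> continuous_on U D)"

definition C2_on :: "'a::euclidean_space set \<Rightarrow> ('a \<Rightarrow> 'b::real_normed_vector) \<Rightarrow> bool" where
  "C2_on U h \<longleftrightarrow> (\<exists>D :: 'a \<Rightarrow> ('a \<Rightarrow>\<^sub>L 'b).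
      (\<forall>x\<in>U. (h has_derivative blinfun_apply (D x)) (at x)) \<and> C1_on U D)"

definition C2_diffeo :: "'a::euclidean_space set \<Rightarrow> 'a set \<Rightarrow> ('a \<Rightarrow> 'a) \<Rightarrow> bool" where
  "C2_diffeo U V h \<longleftrightarrow> open U \<and> open V \<and> h ` U = V \<and> C2_on U h \<and>
     (\<exists>k. C2_on V k \<and> (\<forall>x\<in>U. k (h x) = x) \<and> (\<forall>y\<in>V. h (k y) = y))"

definition locally_lipschitz_on :: "'a::metric_space set \<Rightarrow> ('a \<Rightarrow> real) \<Rightarrow> bool" where
  "locally_lipschitz_on A h \<longleftrightarrow> (\<forall>x\<in>A. \<exists>e>0. \<exists>L. L-lipschitz_on (cball x e \<inter> A) h)"

definition alexandrov_point :: "('a::euclidean_space \<Rightarrow> real) \<Rightarrow> 'a \<Rightarrow> bool" where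
  "alexandrov_point h x \<longleftrightarrow> (\<exists>L. (h has_derivative L) (at x) \<and>
     (\<exists>Q. bilinear Q \<and> (\<forall>u v. Q u v = Q v u) \<and>
        ((\<lambda>y. (h y - h x - L (y - x) - Q (y - x) (y - x)) / (norm (y - x))\<^sup>2) \<longlongrightarrow> 0) (at x)))"

definition graph_over :: "('a \<Rightarrow> real) \<Rightarrow> 'a set \<Rightarrow> ('a \<times> real) set" where
  "graph_over h A = {(x, h x) | x. x \<in> A}"

end

theory Submission
  imports Defs
begin

text \<open>
  An Alexandrov point of f is a point where f has a second-order expansion
  f x = f x0 + L (x - x0) + Q (x - x0) (x - x0) + o(|x - x0|^2); the quadratic part may be
  symmetrised at no cost. Such expansions survive composition and passage to a local inverse
  whose linear part is injective. Let k be the inverse of \<phi>. Near x0 the chart change carries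
  the graph of f onto that of g: with Y x = fst (\<phi> (x, f x)) and G x = snd (\<phi> (x, f x)), which
  have expansions at x0 because \<phi> is C^2, we get g = G \<circ> X near y0, where X y = fst (k (y, g y))
  inverts Y. Since g is Lipschitz and k is differentiable, X is Lipschitz at y0; together with
  X \<circ> Y = id this makes the derivative of Y injective, so X and then g = G \<circ> X have
  second-order expansions.
\<close>

section \<open>Bounded bilinear maps\<close>

lemma bounded_bilinear_linear_compose:
  assumes "bounded_linear M" and "bounded_bilinear Q"
  shows "bounded_bilinear (\<lambda>u v. M (Q u v))"
proof -
  interpret M: bounded_linear M by fact
  interpret Q: bounded_bilinear Q by fact
  obtain KM where KM: "\<And>x. norm (M x) \<le> norm x * KM" "KM > 0"
    using M.pos_bounded by blast
  obtain KQ where KQ: "\<And>a b. norm (Q a b) \<le> norm a * norm b * KQ"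
    using Q.bounded by blast
  show ?thesis
  proof
    have "norm (M (Q a b)) \<le> norm a * norm b * (KQ * KM)" for a b
      using order_trans[OF KM(1) mult_right_mono[OF KQ]] KM(2) by (simp add: ac_simps)
    then show "\<exists>K. \<forall>a b. norm (M (Q a b)) \<le> norm a * norm b * K" by blast
  qed (simp_all add: Q.add_left Q.add_right Q.scaleR_left Q.scaleR_right M.add M.scale)
qed

lemma bounded_bilinear_add:
  assumes "bounded_bilinear Q" and "bounded_bilinear R"
  shows "bounded_bilinear (\<lambda>u v. Q u v + R u v)"
proof -
  interpret Q: bounded_bilinear Q by fact
  interpret R: bounded_bilinear R by fact
  obtain KQ where KQ: "\<And>a b. norm (Q a b) \<le> norm a * norm b * KQ"
    using Q.bounded by blast
  obtain KR where KR: "\<And>a b. norm (R a b) \<le> norm a * norm b * KR"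
    using R.bounded by blast
  show ?thesis
  proof
    have "norm (Q a b + R a b) \<le> norm a * norm b * (KQ + KR)" for a b
      using norm_triangle_ineq[of "Q a b" "R a b"] KQ[of a b] KR[of a b]
      by (simp add: distrib_left)
    then show "\<exists>K. \<forall>a b. norm (Q a b + R a b) \<le> norm a * norm b * K" by blast
  qed (simp_all add: Q.add_left Q.add_right Q.scaleR_left Q.scaleR_right
         R.add_left R.add_right R.scaleR_left R.scaleR_right algebra_simps)
qed

lemma bounded_bilinear_diagonal_diff_bound:
  assumes "bounded_bilinear Q"
  obtains K where "K > 0" "\<And>u v. norm (Q u u - Q v v) \<le> K * norm (u - v) * (norm u + norm v)"
proof -
  interpret Q: bounded_bilinear Q by fact
  obtain K where K: "\<And>a b. norm (Q a b) \<le> norm a * norm b * K" "K > 0"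
    using Q.pos_bounded by blast
  have "norm (Q u u - Q v v) \<le> K * norm (u - v) * (norm u + norm v)" for u v
  proof -
    have "Q u u - Q v v = Q (u - v) u + Q v (u - v)"
      by (simp add: Q.diff_left Q.diff_right)
    then have "norm (Q u u - Q v v) \<le> norm (u - v) * norm u * K + norm v * norm (u - v) * K"
      using norm_triangle_ineq[of "Q (u - v) u" "Q v (u - v)"] K(1)[of "u - v" u] K(1)[of v "u - v"]
      by simp
    then show ?thesis by (simp add: algebra_simps)
  qed
  with K(2) show thesis by (rule that)
qed

section \<open>Pointwise Lipschitz maps\<close>

lemma eventually_nhds_norm_mult_less:
  fixes p :: "'a::real_normed_vector"
  assumes "e > 0"
  shows "\<forall>\<^sub>F x in nhds p. M * norm (x - p) < e"
  by (rule order_tendstoD(2)[of _ 0]) (auto intro!: tendsto_eq_intros filterlim_ident assms)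

definition lipschitz_at :: "('a::real_normed_vector \<Rightarrow> 'b::real_normed_vector) \<Rightarrow> 'a \<Rightarrow> bool" where
  "lipschitz_at F p \<longleftrightarrow> (\<exists>C. \<forall>\<^sub>F x in nhds p. norm (F x - F p) \<le> C * norm (x - p))"

lemma lipschitz_atE:
  assumes "lipschitz_at F p"
  obtains C where "C > 0" "\<forall>\<^sub>F x in nhds p. norm (F x - F p) \<le> C * norm (x - p)"
proof -
  obtain C where "\<forall>\<^sub>F x in nhds p. norm (F x - F p) \<le> C * norm (x - p)"
    using assms unfolding lipschitz_at_def by blast
  then have "\<forall>\<^sub>F x in nhds p. norm (F x - F p) \<le> max C 1 * norm (x - p)"
    by eventually_elim (meson max.cobounded1 mult_right_mono norm_ge_zero order_trans)
  moreover have "max C 1 > 0" by simp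
  ultimately show thesis using that by blast
qed

lemma lipschitz_at_tendsto:
  assumes "lipschitz_at F p"
  shows "(F \<longlongrightarrow> F p) (nhds p)"
proof -
  obtain C where "\<forall>\<^sub>F x in nhds p. norm (F x - F p) \<le> C * norm (x - p)"
    using assms unfolding lipschitz_at_def by blast
  moreover have "((\<lambda>x. C * norm (x - p)) \<longlongrightarrow> 0) (nhds p)"
    by (auto intro!: tendsto_eq_intros filterlim_ident)
  ultimately show ?thesis
    by (subst Lim_null) (rule Lim_null_comparison)
qed

lemma lipschitz_at_imp_isCont:
  assumes "lipschitz_at F p"
  shows "isCont F p"
  using lipschitz_at_tendsto[OF assms] by (simp add: isCont_def tendsto_at_iff_tendsto_nhds)

lemma lipschitz_at_compose:
  assumes F: "lipschitz_at F p" and G: "lipschitz_at G (F p)"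
  shows "lipschitz_at (\<lambda>x. G (F x)) p"
proof -
  obtain CF where CF: "\<forall>\<^sub>F x in nhds p. norm (F x - F p) \<le> CF * norm (x - p)"
    using F unfolding lipschitz_at_def by blast
  obtain CG where "CG > 0" and CG: "\<forall>\<^sub>F y in nhds (F p). norm (G y - G (F p)) \<le> CG * norm (y - F p)"
    using G by (rule lipschitz_atE)
  have "\<forall>\<^sub>F x in nhds p. norm (G (F x) - G (F p)) \<le> CG * norm (F x - F p)"
    using eventually_compose_filterlim[OF CG lipschitz_at_tendsto[OF F]] .
  with CF have "\<forall>\<^sub>F x in nhds p. norm (G (F x) - G (F p)) \<le> (CG * CF) * norm (x - p)"
  proof eventually_elim
    case (elim x)
    show ?case
      using order_trans[OF elim(2) mult_left_mono[OF elim(1)]] \<open>CG > 0\<close> by (simp add: mult.assoc)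
  qed
  then show ?thesis unfolding lipschitz_at_def by blast
qed

lemma has_derivative_imp_lipschitz_at:
  assumes "(F has_derivative D) (at p)"
  shows "lipschitz_at F p"
proof -
  obtain KD where KD: "\<And>x. norm (D x) \<le> norm x * KD"
    using assms has_derivative_bounded_linear bounded_linear.bounded by blast
  obtain d where "d > 0" and d: "\<And>x. norm (x - p) < d \<Longrightarrow> norm (F x - F p - D (x - p)) \<le> norm (x - p)"
    using assms unfolding has_derivative_at_alt by (metis mult_1 zero_less_one)
  have "\<forall>\<^sub>F x in nhds p. norm (x - p) < d"
    using eventually_nhds_norm_mult_less[OF \<open>d > 0\<close>, where p=p and M=1] by simp
  then have "\<forall>\<^sub>F x in nhds p. norm (F x - F p) \<le> (1 + KD) * norm (x - p)"
  proof eventually_elim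
    case (elim x)
    have "norm (F x - F p) \<le> norm (D (x - p)) + norm (F x - F p - D (x - p))"
      by (rule norm_triangle_sub)
    also have "\<dots> \<le> (1 + KD) * norm (x - p)"
      using d[OF elim] KD[of "x - p"] by (simp add: algebra_simps)
    finally show ?case .
  qed
  then show ?thesis unfolding lipschitz_at_def by blast
qed

lemma bounded_linear_imp_lipschitz_at:
  "bounded_linear M \<Longrightarrow> lipschitz_at M p"
  by (rule has_derivative_imp_lipschitz_at[OF bounded_linear_imp_has_derivative])

lemma lipschitz_at_Pair:
  assumes "lipschitz_at F p" "lipschitz_at G p"
  shows "lipschitz_at (\<lambda>x. (F x, G x)) p"
proof -
  obtain CF CG where
    "\<forall>\<^sub>F x in nhds p. norm (F x - F p) \<le> CF * norm (x - p)"
    "\<forall>\<^sub>F x in nhds p. norm (G x - G p) \<le> CG * norm (x - p)"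
    using assms unfolding lipschitz_at_def by blast
  then have "\<forall>\<^sub>F x in nhds p. norm ((F x, G x) - (F p, G p)) \<le> (CF + CG) * norm (x - p)"
  proof eventually_elim
    case (elim x)
    show ?case
      using order_trans[OF norm_Pair_le add_mono[OF elim]] by (simp add: distrib_right)
  qed
  then show ?thesis unfolding lipschitz_at_def by blast
qed

lemma locally_lipschitz_on_imp_lipschitz_at:
  assumes "locally_lipschitz_on A f" "open A" "x \<in> A"
  shows "lipschitz_at f x"
proof -
  obtain e L where "e > 0" and L: "L-lipschitz_on (cball x e \<inter> A) f"
    using assms unfolding locally_lipschitz_on_def by blast
  obtain r where "r > 0" "ball x r \<subseteq> A"
    using assms(2,3) open_contains_ball by blast
  have "\<forall>\<^sub>F y in nhds x. norm (y - x) < min e r"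
    using eventually_nhds_norm_mult_less[of "min e r", where p=x and M=1] \<open>e > 0\<close> \<open>r > 0\<close> by simp
  then have "\<forall>\<^sub>F y in nhds x. norm (f y - f x) \<le> L * norm (y - x)"
  proof eventually_elim
    case (elim y)
    with \<open>ball x r \<subseteq> A\<close> \<open>x \<in> A\<close> \<open>e > 0\<close> have "y \<in> cball x e \<inter> A" "x \<in> cball x e \<inter> A"
      by (auto simp: dist_norm norm_minus_commute)
    from lipschitz_onD[OF L this] show ?case by (simp add: dist_norm)
  qed
  then show ?thesis unfolding lipschitz_at_def by blast
qed

lemma has_derivative_inj_if_lipschitz_left_inverse:
  assumes Y: "(Y has_derivative a) (at x0)"
    and left_inverse: "\<forall>\<^sub>F x in nhds x0. X (Y x) = x"
    and X: "lipschitz_at X (Y x0)"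
  shows "inj a"
proof -
  interpret a: bounded_linear a using Y by (rule has_derivative_bounded_linear)
  have "X (Y x0) = x0" using left_inverse by (rule eventually_nhds_x_imp_x)
  obtain K where "K > 0" and K: "\<forall>\<^sub>F y in nhds (Y x0). norm (X y - X (Y x0)) \<le> K * norm (y - Y x0)"
    using X by (rule lipschitz_atE)
  have "(Y \<longlongrightarrow> Y x0) (nhds x0)"
    using has_derivative_continuous[OF Y] by (simp add: isCont_def tendsto_at_iff_tendsto_nhds)
  from eventually_compose_filterlim[OF K this] left_inverse
  have "\<forall>\<^sub>F x in nhds x0. norm (x - x0) \<le> K * norm (Y x - Y x0)"
    by eventually_elim (simp add: \<open>X (Y x0) = x0\<close>)
  then obtain d1 where "d1 > 0" and d1: "\<And>x. norm (x - x0) < d1 \<Longrightarrow> norm (x - x0) \<le> K * norm (Y x - Y x0)"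
    unfolding eventually_nhds_metric dist_norm by blast
  have "1 / (2 * K) > 0" using \<open>K > 0\<close> by simp
  with Y obtain d2 where "d2 > 0"
    and d2: "\<And>x. norm (x - x0) < d2 \<Longrightarrow> norm (Y x - Y x0 - a (x - x0)) \<le> 1 / (2 * K) * norm (x - x0)"
    unfolding has_derivative_at_alt by blast
  \<comment> \<open>if a v = 0, Y moves by o(t) along x0 + t v, contradicting the lower bound above\<close>
  have "v = 0" if "a v = 0" for v
  proof (rule ccontr)
    assume "v \<noteq> 0"
    define x where "x = x0 + (min d1 d2 / (2 * norm v)) *\<^sub>R v"
    have "norm (x - x0) = min d1 d2 / 2"
      using \<open>v \<noteq> 0\<close> \<open>d1 > 0\<close> \<open>d2 > 0\<close> by (simp add: x_def)
    then have x: "0 < norm (x - x0)" "norm (x - x0) < d1" "norm (x - x0) < d2"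
      using \<open>d1 > 0\<close> \<open>d2 > 0\<close> by auto
    have "a (x - x0) = 0" by (simp add: x_def a.scaleR that)
    then have Yx: "norm (Y x - Y x0) \<le> 1 / (2 * K) * norm (x - x0)"
      using d2[OF x(3)] by simp
    have "norm (x - x0) \<le> K * (1 / (2 * K) * norm (x - x0))"
      using order_trans[OF d1[OF x(2)] mult_left_mono[OF Yx]] \<open>K > 0\<close> by simp
    with x(1) \<open>K > 0\<close> show False by simp
  qed
  then show "inj a"
    by (intro injI) (metis a.diff eq_iff_diff_eq_0)
qed

section \<open>Second-order expansions\<close>

definition quadratic_expansion ::
    "('a::real_normed_vector \<Rightarrow> 'b::real_normed_vector) \<Rightarrow> 'a \<Rightarrow> ('a \<Rightarrow> 'b) \<Rightarrow> ('a \<Rightarrow> 'a \<Rightarrow> 'b) \<Rightarrow> bool"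
  where "quadratic_expansion F p L Q \<longleftrightarrow> bounded_linear L \<and> bounded_bilinear Q \<and>
    (\<forall>e>0. \<forall>\<^sub>F x in nhds p. norm (F x - F p - L (x - p) - Q (x - p) (x - p)) \<le> e * (norm (x - p))\<^sup>2)"

lemma quadratic_expansionD:
  assumes "quadratic_expansion F p L Q"
  shows "bounded_linear L" "bounded_bilinear Q"
    and "e > 0 \<Longrightarrow> \<forall>\<^sub>F x in nhds p. norm (F x - F p - L (x - p) - Q (x - p) (x - p)) \<le> e * (norm (x - p))\<^sup>2"
  using assms unfolding quadratic_expansion_def by auto

lemma quadratic_expansion_linear_remainder:
  assumes "quadratic_expansion F p L Q"
  obtains C where "C > 0" "\<forall>\<^sub>F x in nhds p. norm (F x - F p - L (x - p)) \<le> C * (norm (x - p))\<^sup>2"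
proof -
  obtain KQ where KQ: "\<And>a b. norm (Q a b) \<le> norm a * norm b * KQ" "KQ > 0"
    using quadratic_expansionD(2)[OF assms] bounded_bilinear.pos_bounded by blast
  have "\<forall>\<^sub>F x in nhds p. norm (F x - F p - L (x - p)) \<le> (1 + KQ) * (norm (x - p))\<^sup>2"
    using quadratic_expansionD(3)[OF assms zero_less_one]
  proof eventually_elim
    case (elim x)
    have "norm (F x - F p - L (x - p))
        \<le> norm (Q (x - p) (x - p)) + norm (F x - F p - L (x - p) - Q (x - p) (x - p))"
      by (rule norm_triangle_sub)
    also have "\<dots> \<le> (1 + KQ) * (norm (x - p))\<^sup>2"
      using elim KQ(1)[of "x - p" "x - p"] by (simp add: power2_eq_square algebra_simps)
    finally show ?case .
  qed
  with KQ(2) show thesis by (intro that[of "1 + KQ"]) simp_all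
qed

lemma quadratic_expansion_imp_has_derivative:
  assumes "quadratic_expansion F p L Q"
  shows "(F has_derivative L) (at p)"
  unfolding has_derivative_at_alt
proof (intro conjI allI impI)
  show "bounded_linear L" using quadratic_expansionD(1)[OF assms] .
  fix e :: real assume "e > 0"
  obtain C where "C > 0" and C: "\<forall>\<^sub>F x in nhds p. norm (F x - F p - L (x - p)) \<le> C * (norm (x - p))\<^sup>2"
    using assms by (rule quadratic_expansion_linear_remainder)
  have "\<forall>\<^sub>F x in nhds p. norm (F x - F p - L (x - p)) \<le> e * norm (x - p)"
    using C eventually_nhds_norm_mult_less[OF \<open>e > 0\<close>, where p=p and M=C]
  proof eventually_elim
    case (elim x)
    then show ?case
      using mult_right_mono[OF less_imp_le[OF elim(2)], of "norm (x - p)"]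
      by (simp add: power2_eq_square mult.assoc)
  qed
  then show "\<exists>d>0. \<forall>x. norm (x - p) < d \<longrightarrow> norm (F x - F p - L (x - p)) \<le> e * norm (x - p)"
    unfolding eventually_nhds_metric by (simp add: dist_norm)
qed

lemma quadratic_expansion_cong:
  assumes "quadratic_expansion F p L Q" and "\<forall>\<^sub>F x in nhds p. F x = G x"
  shows "quadratic_expansion G p L Q"
proof -
  have "F p = G p" using assms(2) by (rule eventually_nhds_x_imp_x)
  have "\<forall>\<^sub>F x in nhds p. norm (G x - G p - L (x - p) - Q (x - p) (x - p)) \<le> e * (norm (x - p))\<^sup>2"
    if "e > 0" for e
    using quadratic_expansionD(3)[OF assms(1) that] assms(2) by eventually_elim (simp add: \<open>F p = G p\<close>)
  with assms(1) show ?thesis unfolding quadratic_expansion_def by blast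
qed

lemma bounded_linear_quadratic_expansion:
  assumes "bounded_linear M"
  shows "quadratic_expansion M p M (\<lambda>u v. 0)"
proof -
  have "bounded_bilinear (\<lambda>u v. 0 :: 'b)" by standard (auto intro: exI[of _ 0])
  with assms show ?thesis
    unfolding quadratic_expansion_def by (simp add: linear_diff bounded_linear.linear)
qed

lemma quadratic_expansion_Pair:
  assumes F: "quadratic_expansion F p LF QF" and G: "quadratic_expansion G p LG QG"
  shows "quadratic_expansion (\<lambda>x. (F x, G x)) p (\<lambda>h. (LF h, LG h)) (\<lambda>u v. (QF u v, QG u v))"
  unfolding quadratic_expansion_def
proof (intro conjI allI impI)
  show "bounded_linear (\<lambda>h. (LF h, LG h))"
    using F G by (intro bounded_linear_Pair) (auto dest: quadratic_expansionD)
  interpret QF: bounded_bilinear QF using F by (rule quadratic_expansionD)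
  interpret QG: bounded_bilinear QG using G by (rule quadratic_expansionD)
  show "bounded_bilinear (\<lambda>u v. (QF u v, QG u v))"
  proof
    obtain KF KG where KF: "\<And>a b. norm (QF a b) \<le> norm a * norm b * KF"
      and KG: "\<And>a b. norm (QG a b) \<le> norm a * norm b * KG"
      using QF.bounded QG.bounded by blast
    have "norm (QF a b, QG a b) \<le> norm a * norm b * (KF + KG)" for a b
      using order_trans[OF norm_Pair_le add_mono[OF KF KG]] by (simp add: distrib_left)
    then show "\<exists>K. \<forall>a b. norm (QF a b, QG a b) \<le> norm a * norm b * K" by blast
  qed (simp_all add: QF.add_left QF.add_right QF.scaleR_left QF.scaleR_right
         QG.add_left QG.add_right QG.scaleR_left QG.scaleR_right)
  fix e :: real assume "e > 0"
  then have "e / 2 > 0" by simp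
  from quadratic_expansionD(3)[OF F this] quadratic_expansionD(3)[OF G this]
  show "\<forall>\<^sub>F x in nhds p. norm ((F x, G x) - (F p, G p) - (LF (x - p), LG (x - p))
      - (QF (x - p) (x - p), QG (x - p) (x - p))) \<le> e * (norm (x - p))\<^sup>2"
  proof eventually_elim
    case (elim x)
    then show ?case
      using norm_Pair_le[of "F x - F p - LF (x - p) - QF (x - p) (x - p)"
          "G x - G p - LG (x - p) - QG (x - p) (x - p)"]
      by simp
  qed
qed

lemma quadratic_expansion_compose:
  assumes F: "quadratic_expansion F p LF QF" and G: "quadratic_expansion G (F p) LG QG"
  shows "quadratic_expansion (\<lambda>x. G (F x)) p (\<lambda>h. LG (LF h)) (\<lambda>u v. LG (QF u v) + QG (LF u) (LF v))"
  unfolding quadratic_expansion_def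
proof (intro conjI allI impI)
  interpret LF: bounded_linear LF using F by (rule quadratic_expansionD)
  interpret LG: bounded_linear LG using G by (rule quadratic_expansionD)
  interpret QF: bounded_bilinear QF using F by (rule quadratic_expansionD)
  interpret QG: bounded_bilinear QG using G by (rule quadratic_expansionD)
  show "bounded_linear (\<lambda>h. LG (LF h))"
    using LG.bounded_linear_axioms LF.bounded_linear_axioms by (rule bounded_linear_compose)
  show "bounded_bilinear (\<lambda>u v. LG (QF u v) + QG (LF u) (LF v))"
    by (rule bounded_bilinear_add[OF bounded_bilinear_linear_compose QG.comp])
      (fact LG.bounded_linear_axioms QF.bounded_bilinear_axioms LF.bounded_linear_axioms)+
  obtain KLF where KLF: "\<And>h. norm (LF h) \<le> norm h * KLF" "KLF > 0"
    using LF.pos_bounded by blast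
  obtain KLG where KLG: "\<And>h. norm (LG h) \<le> norm h * KLG" "KLG > 0"
    using LG.pos_bounded by blast
  obtain KG where "KG > 0" and KG: "\<And>u v. norm (QG u u - QG v v) \<le> KG * norm (u - v) * (norm u + norm v)"
    using bounded_bilinear_diagonal_diff_bound[OF QG.bounded_bilinear_axioms] by blast
  have F_lip: "lipschitz_at F p"
    using F by (intro has_derivative_imp_lipschitz_at quadratic_expansion_imp_has_derivative)
  obtain C where "C > 0" and C: "\<forall>\<^sub>F x in nhds p. norm (F x - F p) \<le> C * norm (x - p)"
    using F_lip by (rule lipschitz_atE)
  obtain CS where "CS > 0" and CS: "\<forall>\<^sub>F x in nhds p. norm (F x - F p - LF (x - p)) \<le> CS * (norm (x - p))\<^sup>2"
    using F by (rule quadratic_expansion_linear_remainder)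
  fix e :: real assume "e > 0"
  have rF: "\<forall>\<^sub>F x in nhds p. norm (F x - F p - LF (x - p) - QF (x - p) (x - p))
      \<le> e / (3 * KLG) * (norm (x - p))\<^sup>2"
    using \<open>e > 0\<close> KLG(2) by (intro quadratic_expansionD(3)[OF F]) simp
  have "\<forall>\<^sub>F y in nhds (F p). norm (G y - G (F p) - LG (y - F p) - QG (y - F p) (y - F p))
      \<le> e / (3 * C\<^sup>2) * (norm (y - F p))\<^sup>2"
    using \<open>e > 0\<close> \<open>C > 0\<close> by (intro quadratic_expansionD(3)[OF G]) simp
  from eventually_compose_filterlim[OF this lipschitz_at_tendsto[OF F_lip]]
  have rG: "\<forall>\<^sub>F x in nhds p. norm (G (F x) - G (F p) - LG (F x - F p) - QG (F x - F p) (F x - F p))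
      \<le> e / (3 * C\<^sup>2) * (norm (F x - F p))\<^sup>2" .
  \<comment> \<open>absorbs QG k k - QG (LF h) (LF h) for h = x - p, k = F x - F p; it is cubic in h
    because k - LF h = O(|h|^2)\<close>
  have small: "\<forall>\<^sub>F x in nhds p. KG * CS * (C + KLF) * norm (x - p) < e / 3"
    using \<open>e > 0\<close> by (intro eventually_nhds_norm_mult_less) simp
  from C CS rF rG small
  show "\<forall>\<^sub>F x in nhds p. norm (G (F x) - G (F p) - LG (LF (x - p))
      - (LG (QF (x - p) (x - p)) + QG (LF (x - p)) (LF (x - p)))) \<le> e * (norm (x - p))\<^sup>2"
  proof eventually_elim
    case (elim x)
    define h k where "h = x - p" and "k = F x - F p"
    define r1 r2 where "r1 = k - LF h - QF h h" and "r2 = G (F x) - G (F p) - LG k - QG k k"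
    have k: "norm k \<le> C * norm h" and s: "norm (k - LF h) \<le> CS * (norm h)\<^sup>2"
      using elim(1,2) by (simp_all add: h_def k_def)
    have "norm r2 \<le> e / (3 * C\<^sup>2) * (norm k)\<^sup>2"
      using elim(4) by (simp add: r2_def k_def)
    also have "\<dots> \<le> e / (3 * C\<^sup>2) * (C * norm h)\<^sup>2"
      using k \<open>e > 0\<close> by (intro mult_left_mono power_mono) simp_all
    finally have r2: "norm r2 \<le> e / 3 * (norm h)\<^sup>2"
      using \<open>C > 0\<close> by (simp add: power_mult_distrib)
    have "norm (LG r1) \<le> norm r1 * KLG" by (rule KLG(1))
    also have "\<dots> \<le> e / (3 * KLG) * (norm h)\<^sup>2 * KLG"
      using elim(3) KLG(2) by (intro mult_right_mono) (simp_all add: r1_def h_def k_def)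
    finally have r1: "norm (LG r1) \<le> e / 3 * (norm h)\<^sup>2"
      using KLG(2) by simp
    have "norm (QG k k - QG (LF h) (LF h)) \<le> KG * norm (k - LF h) * (norm k + norm (LF h))"
      by (rule KG)
    also have "\<dots> \<le> KG * (CS * (norm h)\<^sup>2) * (C * norm h + norm h * KLF)"
      using k s KLF(1)[of h] \<open>KG > 0\<close> \<open>CS > 0\<close> by (intro mult_mono add_mono) simp_all
    also have "\<dots> = (KG * CS * (C + KLF) * norm h) * (norm h)\<^sup>2"
      by (simp add: algebra_simps)
    also have "\<dots> \<le> e / 3 * (norm h)\<^sup>2"
      using elim(5) by (intro mult_right_mono) (simp_all add: h_def)
    finally have r3: "norm (QG k k - QG (LF h) (LF h)) \<le> e / 3 * (norm h)\<^sup>2" .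
    have "G (F x) - G (F p) - LG (LF h) - (LG (QF h h) + QG (LF h) (LF h))
        = r2 + LG r1 + (QG k k - QG (LF h) (LF h))"
      unfolding r1_def r2_def k_def by (simp add: LG.diff)
    moreover have "norm (r2 + LG r1 + (QG k k - QG (LF h) (LF h))) \<le> e * (norm h)\<^sup>2"
      using norm_triangle_ineq[of "r2 + LG r1" "QG k k - QG (LF h) (LF h)"]
        norm_triangle_ineq[of r2 "LG r1"] r1 r2 r3 by linarith
    ultimately show ?case by (simp only: h_def)
  qed
qed

lemma quadratic_expansion_inverse:
  assumes Y: "quadratic_expansion Y x0 a b"
    and ai: "bounded_linear ai" "\<And>v. ai (a v) = v"
    and X: "lipschitz_at X y0" "X y0 = x0"
    and right_inverse: "\<forall>\<^sub>F y in nhds y0. Y (X y) = y"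
  shows "quadratic_expansion X y0 ai (\<lambda>u v. - ai (b (ai u) (ai v)))"
  unfolding quadratic_expansion_def
proof (intro conjI allI impI)
  interpret ai: bounded_linear ai by fact
  interpret b: bounded_bilinear b using Y by (rule quadratic_expansionD)
  show "bounded_linear ai" by fact
  show "bounded_bilinear (\<lambda>u v. - ai (b (ai u) (ai v)))"
    using bounded_bilinear_linear_compose[OF bounded_linear_minus[OF ai(1)] b.comp[OF ai(1) ai(1)]] .
  have "Y x0 = y0"
    using eventually_nhds_x_imp_x[OF right_inverse] X(2) by simp
  obtain Ka where Ka: "\<And>v. norm (ai v) \<le> norm v * Ka" "Ka > 0"
    using ai.pos_bounded by blast
  obtain Kb where "Kb > 0" and Kb: "\<And>u v. norm (b u u - b v v) \<le> Kb * norm (u - v) * (norm u + norm v)"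
    using bounded_bilinear_diagonal_diff_bound[OF b.bounded_bilinear_axioms] by blast
  obtain K where "K > 0" and K: "\<forall>\<^sub>F y in nhds y0. norm (X y - x0) \<le> K * norm (y - y0)"
    using X(1) by (rule lipschitz_atE) (use X(2) in simp)
  obtain CS where "CS > 0" and CS: "\<forall>\<^sub>F x in nhds x0. norm (Y x - Y x0 - a (x - x0)) \<le> CS * (norm (x - x0))\<^sup>2"
    using Y by (rule quadratic_expansion_linear_remainder)
  have X_tendsto: "(X \<longlongrightarrow> x0) (nhds y0)"
    using lipschitz_at_tendsto[OF X(1)] X(2) by simp
  fix e :: real assume "e > 0"
  have "\<forall>\<^sub>F x in nhds x0. norm (Y x - Y x0 - a (x - x0) - b (x - x0) (x - x0))
      \<le> e / (2 * Ka * K\<^sup>2) * (norm (x - x0))\<^sup>2"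
    using \<open>e > 0\<close> \<open>K > 0\<close> Ka(2) by (intro quadratic_expansionD(3)[OF Y]) simp
  note rY = eventually_compose_filterlim[OF this X_tendsto]
  note sY = eventually_compose_filterlim[OF CS X_tendsto]
  \<comment> \<open>absorbs ai (b w w - b h h) for k = y - y0, h = X y - x0, w = ai k; it is cubic in k
    because w - h = ai (k - a h) = O(|k|^2)\<close>
  have small: "\<forall>\<^sub>F y in nhds y0. Ka * Kb * (Ka * CS * K\<^sup>2) * (Ka + K) * norm (y - y0) < e / 2"
    using \<open>e > 0\<close> by (intro eventually_nhds_norm_mult_less) simp
  from right_inverse K rY sY small
  show "\<forall>\<^sub>F y in nhds y0. norm (X y - X y0 - ai (y - y0) - - ai (b (ai (y - y0)) (ai (y - y0))))
      \<le> e * (norm (y - y0))\<^sup>2"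
  proof eventually_elim
    case (elim y)
    define k h where "k = y - y0" and "h = X y - x0"
    define w r where "w = ai k" and "r = k - a h - b h h"
    have h: "norm h \<le> K * norm k"
      using elim(2) by (simp add: k_def h_def)
    then have h2: "(norm h)\<^sup>2 \<le> K\<^sup>2 * (norm k)\<^sup>2"
      by (metis norm_ge_zero power_mono power_mult_distrib)
    have r: "norm r \<le> e / (2 * Ka * K\<^sup>2) * (norm h)\<^sup>2"
      using elim(1,3) \<open>Y x0 = y0\<close> by (simp add: r_def k_def h_def)
    have "norm (ai r) \<le> norm r * Ka" by (rule Ka(1))
    also have "\<dots> \<le> e / (2 * Ka * K\<^sup>2) * (K\<^sup>2 * (norm k)\<^sup>2) * Ka"
      using r h2 \<open>e > 0\<close> Ka(2) \<open>K > 0\<close> by (intro mult_right_mono order_trans[OF r] mult_left_mono) simp_all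
    finally have air: "norm (ai r) \<le> e / 2 * (norm k)\<^sup>2"
      using Ka(2) \<open>K > 0\<close> by simp
    have "w - h = ai (k - a h)"
      by (simp add: w_def ai.diff ai(2))
    then have "norm (w - h) \<le> Ka * CS * (norm h)\<^sup>2"
      using Ka(1)[of "k - a h"] elim(1,4) Ka(2) \<open>Y x0 = y0\<close>
      by (simp add: k_def h_def mult.commute mult.left_commute mult_left_mono order_trans)
    also have "\<dots> \<le> Ka * CS * (K\<^sup>2 * (norm k)\<^sup>2)"
      using h2 Ka(2) \<open>CS > 0\<close> by (intro mult_left_mono) simp_all
    finally have wh: "norm (w - h) \<le> Ka * CS * K\<^sup>2 * (norm k)\<^sup>2" by simp
    have "norm (ai (b w w - b h h)) \<le> Ka * (Kb * norm (w - h) * (norm w + norm h))"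
      using Ka(1)[of "b w w - b h h"] Kb[of w h] Ka(2) by (simp add: mult.commute mult_left_mono order_trans)
    also have "\<dots> \<le> Ka * (Kb * (Ka * CS * K\<^sup>2 * (norm k)\<^sup>2) * (Ka * norm k + K * norm k))"
      using wh h Ka \<open>Kb > 0\<close> \<open>CS > 0\<close> by (intro mult_left_mono mult_mono add_mono) (simp_all add: w_def mult.commute)
    also have "\<dots> = (Ka * Kb * (Ka * CS * K\<^sup>2) * (Ka + K) * norm k) * (norm k)\<^sup>2"
      by (simp add: algebra_simps)
    also have "\<dots> \<le> e / 2 * (norm k)\<^sup>2"
      using elim(5) by (intro mult_right_mono) (simp_all add: k_def)
    finally have aib: "norm (ai (b w w - b h h)) \<le> e / 2 * (norm k)\<^sup>2" .
    have "k = a h + b h h + r" by (simp add: r_def)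
    then have "X y - X y0 - ai k - - ai (b w w) = ai (b w w - b h h) - ai r"
      by (simp add: h_def w_def X(2) ai.add ai.diff ai(2))
    moreover have "norm (ai (b w w - b h h) - ai r) \<le> e * (norm k)\<^sup>2"
      using norm_triangle_ineq4[of "ai (b w w - b h h)" "ai r"] air aib by linarith
    ultimately show ?case by (simp only: k_def w_def)
  qed
qed

lemma quadratic_expansion_compose_local_inverse:
  fixes Y :: "'a::euclidean_space \<Rightarrow> 'a" and G :: "'a \<Rightarrow> 'b::real_normed_vector"
  assumes Y: "quadratic_expansion Y x0 LY QY" and G: "quadratic_expansion G x0 LG QG"
    and X: "lipschitz_at X y0" "X y0 = x0"
    and left_inverse: "\<forall>\<^sub>F x in nhds x0. X (Y x) = x"
    and right_inverse: "\<forall>\<^sub>F y in nhds y0. Y (X y) = y \<and> G (X y) = g y"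
  shows "\<exists>L Q. quadratic_expansion g y0 L Q"
proof -
  have "Y x0 = y0"
    using eventually_nhds_x_imp_x[OF right_inverse] X(2) by simp
  have "inj LY"
    using quadratic_expansion_imp_has_derivative[OF Y] left_inverse
    by (rule has_derivative_inj_if_lipschitz_left_inverse) (simp add: \<open>Y x0 = y0\<close> X(1))
  then obtain LX where "linear LX" "LX \<circ> LY = id"
    using linear_injective_left_inverse quadratic_expansionD(1)[OF Y] bounded_linear.linear by blast
  then have "quadratic_expansion X y0 LX (\<lambda>u v. - LX (QY (LX u) (LX v)))"
    using Y X right_inverse
    by (intro quadratic_expansion_inverse)
      (auto simp: linear_conv_bounded_linear pointfree_idE elim: eventually_mono)
  from quadratic_expansion_compose[OF this] G X(2)
  have "quadratic_expansion (\<lambda>y. G (X y)) y0 (\<lambda>h. LG (LX h))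
      (\<lambda>u v. LG (- LX (QY (LX u) (LX v))) + QG (LX u) (LX v))"
    by simp
  moreover have "\<forall>\<^sub>F y in nhds y0. G (X y) = g y"
    using right_inverse by eventually_elim simp
  ultimately show ?thesis
    by (blast intro: quadratic_expansion_cong)
qed

lemma alexandrov_point_iff_quadratic_expansion:
  fixes f :: "'a::euclidean_space \<Rightarrow> real"
  shows "alexandrov_point f x \<longleftrightarrow> (\<exists>L Q. quadratic_expansion f x L Q)"
proof
  assume "alexandrov_point f x"
  then obtain L Q where L: "(f has_derivative L) (at x)" and "bilinear Q"
    and lim: "((\<lambda>y. (f y - f x - L (y - x) - Q (y - x) (y - x)) / (norm (y - x))\<^sup>2) \<longlongrightarrow> 0) (at x)"
    unfolding alexandrov_point_def by blast
  interpret L: bounded_linear L using L by (rule has_derivative_bounded_linear)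
  interpret Q: bounded_bilinear Q using \<open>bilinear Q\<close> by (simp add: bilinear_conv_bounded_bilinear)
  have "quadratic_expansion f x L Q"
    unfolding quadratic_expansion_def
  proof (intro conjI allI impI)
    show "bounded_linear L" "bounded_bilinear Q" by unfold_locales
    fix e :: real assume "e > 0"
    with lim have "\<forall>\<^sub>F y in nhds x. y \<noteq> x \<longrightarrow>
        \<bar>f y - f x - L (y - x) - Q (y - x) (y - x)\<bar> / (norm (y - x))\<^sup>2 < e"
      by (simp add: tendsto_iff eventually_at_filter)
    then show "\<forall>\<^sub>F y in nhds x. norm (f y - f x - L (y - x) - Q (y - x) (y - x)) \<le> e * (norm (y - x))\<^sup>2"
      by eventually_elim (auto simp: L.zero Q.zero_left divide_less_eq less_imp_le)
  qed
  then show "\<exists>L Q. quadratic_expansion f x L Q" by blast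
next
  assume "\<exists>L Q. quadratic_expansion f x L Q"
  then obtain L Q where E: "quadratic_expansion f x L Q" by blast
  interpret Q: bounded_bilinear Q using E by (rule quadratic_expansionD)
  define S where "S u v = (Q u v + Q v u) / 2" for u v
  have "bounded_bilinear S"
    unfolding S_def
    by (rule bounded_bilinear_linear_compose[OF bounded_linear_divide bounded_bilinear_add])
      (fact Q.bounded_bilinear_axioms Q.flip)+
  then have "bilinear S" by (simp add: bilinear_conv_bounded_bilinear)
  have "((\<lambda>y. (f y - f x - L (y - x) - S (y - x) (y - x)) / (norm (y - x))\<^sup>2) \<longlongrightarrow> 0) (at x)"
    unfolding tendsto_iff eventually_at_filter
  proof (intro allI impI)
    fix e :: real assume "e > 0"
    then have "e / 2 > 0" by simp
    from quadratic_expansionD(3)[OF E this]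
    show "\<forall>\<^sub>F y in nhds x. y \<noteq> x \<longrightarrow> y \<in> UNIV \<longrightarrow>
        dist ((f y - f x - L (y - x) - S (y - x) (y - x)) / (norm (y - x))\<^sup>2) 0 < e"
    proof eventually_elim
      case (elim y)
      show ?case
      proof (intro impI)
        assume "y \<noteq> x"
        with \<open>e > 0\<close> have "0 < e * (norm (y - x))\<^sup>2" by simp
        with elim \<open>e > 0\<close>
        show "dist ((f y - f x - L (y - x) - S (y - x) (y - x)) / (norm (y - x))\<^sup>2) 0 < e"
          by (simp add: S_def dist_norm divide_less_eq)
      qed
    qed
  qed
  moreover have "\<forall>u v. S u v = S v u" by (simp add: S_def add.commute)
  ultimately show "alexandrov_point f x"
    unfolding alexandrov_point_def
    using quadratic_expansion_imp_has_derivative[OF E] \<open>bilinear S\<close> by blast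
qed

section \<open>Twice differentiable maps\<close>

lemma second_order_mean_value_bound:
  fixes F :: "'a::real_normed_vector \<Rightarrow> 'b::real_normed_vector" and D :: "'a \<Rightarrow> 'a \<Rightarrow>\<^sub>L 'b"
  assumes deriv: "\<And>t. t \<in> {0..1} \<Longrightarrow> (F has_derivative D (p + t *\<^sub>R h)) (at (p + t *\<^sub>R h))"
    and bound: "\<And>t. t \<in> {0..1} \<Longrightarrow> norm (D (p + t *\<^sub>R h) h - D p h - t *\<^sub>R c) \<le> B"
  shows "norm (F (p + h) - F p - D p h - (1 / 2) *\<^sub>R c) \<le> B"
proof -
  define \<psi> where "\<psi> t = F (p + t *\<^sub>R h) - t *\<^sub>R D p h - (t\<^sup>2 / 2) *\<^sub>R c" for t :: real
  define \<psi>' where "\<psi>' t = D (p + t *\<^sub>R h) h - D p h - t *\<^sub>R c" for t :: real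
  have "(\<psi> has_vector_derivative \<psi>' t) (at t within {0..1})" if "t \<in> {0..1}" for t
  proof -
    have "((\<lambda>t. p + t *\<^sub>R h) has_derivative (\<lambda>s. s *\<^sub>R h)) (at t within {0..1})"
      by (auto intro!: derivative_eq_intros)
    from has_derivative_compose[OF this deriv[OF that]]
    have "((\<lambda>t. F (p + t *\<^sub>R h)) has_derivative (\<lambda>s. s *\<^sub>R D (p + t *\<^sub>R h) h)) (at t within {0..1})"
      by (simp add: blinfun.scaleR_right)
    then have "(\<psi> has_derivative (\<lambda>s. s *\<^sub>R D (p + t *\<^sub>R h) h - s *\<^sub>R D p h - (s * t) *\<^sub>R c))
        (at t within {0..1})"
      unfolding \<psi>_def by (auto intro!: derivative_eq_intros simp: power2_eq_square)
    then show ?thesis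
      by (simp add: has_vector_derivative_def \<psi>'_def algebra_simps)
  qed
  moreover have "norm (\<psi>' t - \<psi>' 0) \<le> B" if "t \<in> {0..1}" for t
    using bound[OF that] by (simp add: \<psi>'_def)
  ultimately have "norm (\<psi> 1 - \<psi> 0 - (1 - 0) *\<^sub>R \<psi>' 0) \<le> norm (1 - 0 :: real) * B"
    by (intro vector_differentiable_bound_linearization[of "{0..1}"]) (auto simp: closed_segment_eq_real_ivl)
  then show ?thesis
    by (simp add: \<psi>_def \<psi>'_def algebra_simps)
qed

lemma twice_differentiable_imp_quadratic_expansion:
  fixes F :: "'a::real_normed_vector \<Rightarrow> 'b::real_normed_vector" and D :: "'a \<Rightarrow> 'a \<Rightarrow>\<^sub>L 'b"
  assumes "open U" "p \<in> U"
    and deriv: "\<And>x. x \<in> U \<Longrightarrow> (F has_derivative D x) (at x)"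
    and deriv2: "(D has_derivative D2) (at p)"
  shows "quadratic_expansion F p (D p) (\<lambda>u v. (1 / 2) *\<^sub>R D2 u v)"
  unfolding quadratic_expansion_def
proof (intro conjI allI impI)
  show "bounded_linear (blinfun_apply (D p))" by (rule blinfun.bounded_linear_right)
  have "bounded_linear D2" using deriv2 by (rule has_derivative_bounded_linear)
  then show "bounded_bilinear (\<lambda>u v. (1 / 2) *\<^sub>R D2 u v)"
    by (intro bounded_bilinear_linear_compose[OF bounded_linear_scaleR_right]
        bounded_bilinear.comp1[OF bounded_bilinear_blinfun_apply])
  fix e :: real assume "e > 0"
  with deriv2 obtain d where "d > 0"
    and d: "\<And>x. norm (x - p) < d \<Longrightarrow> norm (D x - D p - D2 (x - p)) \<le> e * norm (x - p)"
    unfolding has_derivative_at_alt by blast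
  obtain r where "r > 0" "ball p r \<subseteq> U"
    using assms(1,2) open_contains_ball by blast
  have "\<forall>\<^sub>F x in nhds p. norm (x - p) < min d r"
    using eventually_nhds_norm_mult_less[of "min d r", where p=p and M=1] \<open>d > 0\<close> \<open>r > 0\<close> by simp
  then show "\<forall>\<^sub>F x in nhds p. norm (F x - F p - D p (x - p) - (1 / 2) *\<^sub>R D2 (x - p) (x - p))
      \<le> e * (norm (x - p))\<^sup>2"
  proof eventually_elim
    case (elim x)
    define h where "h = x - p"
    have segment: "norm (t *\<^sub>R h) \<le> norm h" if "t \<in> {0..1}" for t
      using that by (auto intro: mult_left_le_one_le)
    have "norm (F (p + h) - F p - D p h - (1 / 2) *\<^sub>R D2 h h) \<le> e * (norm h)\<^sup>2"
    proof (rule second_order_mean_value_bound)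
      fix t :: real assume t: "t \<in> {0..1}"
      have "p + t *\<^sub>R h \<in> ball p r"
        using segment[OF t] elim by (simp add: h_def dist_norm)
      then show "(F has_derivative D (p + t *\<^sub>R h)) (at (p + t *\<^sub>R h))"
        using \<open>ball p r \<subseteq> U\<close> deriv by blast
      have "D (p + t *\<^sub>R h) h - D p h - t *\<^sub>R D2 h h = (D (p + t *\<^sub>R h) - D p - D2 (t *\<^sub>R h)) h"
        by (simp add: blinfun.diff_left blinfun.scaleR_left linear_cmul
            has_derivative_bounded_linear[OF deriv2, THEN bounded_linear.linear])
      also have "norm \<dots> \<le> norm (D (p + t *\<^sub>R h) - D p - D2 (t *\<^sub>R h)) * norm h"
        by (rule norm_blinfun)
      also have "\<dots> \<le> e * norm (t *\<^sub>R h) * norm h"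
        using d[of "p + t *\<^sub>R h"] segment[OF t] elim by (intro mult_right_mono) (simp_all add: h_def)
      also have "\<dots> \<le> e * (norm h)\<^sup>2"
        using mult_right_mono[OF mult_left_mono[OF segment[OF t], of e], of "norm h"] \<open>e > 0\<close>
        by (simp add: power2_eq_square)
      finally show "norm (D (p + t *\<^sub>R h) h - D p h - t *\<^sub>R D2 h h) \<le> e * (norm h)\<^sup>2" .
    qed
    then show ?case by (simp add: h_def)
  qed
qed

lemma C2_on_imp_quadratic_expansion:
  assumes "C2_on U F" "open U" "p \<in> U"
  shows "\<exists>L Q. quadratic_expansion F p L Q"
proof -
  obtain D D2 where "\<And>x. x \<in> U \<Longrightarrow> (F has_derivative blinfun_apply (D x)) (at x)"
    and "(D has_derivative blinfun_apply (D2 p)) (at p)"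
    using assms unfolding C2_on_def C1_on_def by blast
  with assms(2,3) show ?thesis
    by (blast intro: twice_differentiable_imp_quadratic_expansion)
qed

lemma C2_on_differentiable:
  assumes "C2_on U F" "x \<in> U"
  shows "F differentiable (at x)"
  using assms unfolding C2_on_def differentiable_def by blast

lemma C2_diffeo_open_image:
  assumes "C2_diffeo U V \<phi>" "open N" "N \<subseteq> U"
  shows "open (\<phi> ` N)"
proof -
  obtain k where "open V" "\<phi> ` U = V" "C2_on V k"
    and k\<phi>: "\<And>x. x \<in> U \<Longrightarrow> k (\<phi> x) = x" and \<phi>k: "\<And>y. y \<in> V \<Longrightarrow> \<phi> (k y) = y"
    using assms(1) unfolding C2_diffeo_def by blast
  have "continuous_on V k"
    using C2_on_differentiable[OF \<open>C2_on V k\<close>] differentiable_imp_continuous_within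
    by (blast intro: continuous_at_imp_continuous_on)
  moreover have "\<phi> ` N = V \<inter> k -` N"
  proof
    show "\<phi> ` N \<subseteq> V \<inter> k -` N"
      using assms(3) \<open>\<phi> ` U = V\<close> k\<phi> by auto
    show "V \<inter> k -` N \<subseteq> \<phi> ` N"
    proof
      fix y assume "y \<in> V \<inter> k -` N"
      then show "y \<in> \<phi> ` N"
        using \<phi>k[of y] by (auto intro: image_eqI[where x="k y"])
    qed
  qed
  ultimately show ?thesis
    using continuous_open_preimage[OF _ \<open>open V\<close> assms(2)] by simp
qed

section \<open>Graphs under a change of chart\<close>

lemma eventually_graph_in_open:
  assumes "isCont f x0" "open A" "x0 \<in> A" "open W" "(x0, f x0) \<in> W"
  shows "\<forall>\<^sub>F x in nhds x0. (x, f x) \<in> W \<inter> graph_over f A"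
proof -
  have "isCont (\<lambda>x. (x, f x)) x0"
    using assms(1) by (intro continuous_intros)
  then have "((\<lambda>x. (x, f x)) \<longlongrightarrow> (x0, f x0)) (nhds x0)"
    using tendsto_at_iff_tendsto_nhds[of "\<lambda>x. (x, f x)" x0] by (simp add: isCont_def)
  then have "\<forall>\<^sub>F x in nhds x0. (x, f x) \<in> W"
    using assms(4,5) by (rule topological_tendstoD)
  moreover have "\<forall>\<^sub>F x in nhds x0. x \<in> A"
    using assms(2,3) by (rule eventually_nhds_in_open)
  ultimately show ?thesis
    by eventually_elim (auto simp: graph_over_def)
qed

lemma eventually_graph_transition_inverse:
  assumes inverse: "\<And>p. p \<in> W \<Longrightarrow> \<psi> (\<phi> p) = p"
    and "isCont f x0" "open A" "x0 \<in> A" "open W" "(x0, f x0) \<in> W"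
    and graphs: "\<phi> ` (W \<inter> graph_over f A) \<subseteq> graph_over g B"
  shows "\<forall>\<^sub>F x in nhds x0. \<psi> (fst (\<phi> (x, f x)), g (fst (\<phi> (x, f x)))) = (x, f x)"
  using eventually_graph_in_open[OF assms(2-6)]
proof eventually_elim
  case (elim x)
  then have "\<phi> (x, f x) \<in> graph_over g B"
    using graphs by blast
  then have "\<phi> (x, f x) = (fst (\<phi> (x, f x)), g (fst (\<phi> (x, f x))))"
    by (auto simp: graph_over_def)
  then show ?case
    using inverse[of "(x, f x)"] elim by simp
qed

lemma graph_transition_local_inverses:
  assumes k\<phi>: "\<And>p. p \<in> N \<Longrightarrow> k (\<phi> p) = p"
    and "open N" "open (\<phi> ` N)" "open A" "open B" "x0 \<in> A" "y0 \<in> B"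
    and "(x0, f x0) \<in> N" "\<phi> (x0, f x0) = (y0, g y0)"
    and "isCont f x0" "isCont g y0"
    and graphs: "\<phi> ` (N \<inter> graph_over f A) = \<phi> ` N \<inter> graph_over g B"
  defines "X \<equiv> \<lambda>y. fst (k (y, g y))"
  shows "\<forall>\<^sub>F x in nhds x0. X (fst (\<phi> (x, f x))) = x"
    and "\<forall>\<^sub>F y in nhds y0. fst (\<phi> (X y, f (X y))) = y \<and> snd (\<phi> (X y, f (X y))) = g y"
proof -
  have "\<forall>\<^sub>F x in nhds x0. k (fst (\<phi> (x, f x)), g (fst (\<phi> (x, f x)))) = (x, f x)"
    by (rule eventually_graph_transition_inverse[OF _ \<open>isCont f x0\<close> \<open>open A\<close> \<open>x0 \<in> A\<close> \<open>open N\<close>])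
      (use assms in auto)
  then show "\<forall>\<^sub>F x in nhds x0. X (fst (\<phi> (x, f x))) = x"
    by eventually_elim (simp add: X_def)
  have "(y0, g y0) \<in> \<phi> ` N"
    using assms(8,9) by (metis image_eqI)
  moreover have "k ` (\<phi> ` N \<inter> graph_over g B) \<subseteq> graph_over f A"
    unfolding graphs[symmetric] image_image using k\<phi> by auto
  ultimately have "\<forall>\<^sub>F y in nhds y0. \<phi> (X y, f (X y)) = (y, g y)"
    unfolding X_def using k\<phi>
    by (intro eventually_graph_transition_inverse[OF _ \<open>isCont g y0\<close> \<open>open B\<close> \<open>y0 \<in> B\<close> \<open>open (\<phi> ` N)\<close>]) auto
  then show "\<forall>\<^sub>F y in nhds y0. fst (\<phi> (X y, f (X y))) = y \<and> snd (\<phi> (X y, f (X y))) = g y"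
    by eventually_elim simp
qed

lemma lipschitz_at_graph_chart:
  assumes "lipschitz_at g y0" "k differentiable (at (y0, g y0))"
  shows "lipschitz_at (\<lambda>y. fst (k (y, g y))) y0"
proof -
  have "lipschitz_at (\<lambda>y. (y, g y)) y0"
    by (rule lipschitz_at_Pair[OF bounded_linear_imp_lipschitz_at[OF bounded_linear_ident] assms(1)])
  moreover have "lipschitz_at k (y0, g y0)"
    using assms(2) unfolding differentiable_def by (blast intro: has_derivative_imp_lipschitz_at)
  ultimately have "lipschitz_at (\<lambda>y. k (y, g y)) y0"
    by (rule lipschitz_at_compose)
  then show ?thesis
    by (rule lipschitz_at_compose[OF _ bounded_linear_imp_lipschitz_at[OF bounded_linear_fst]])
qed

theorem mainTheorem5:
  fixes f g :: "real^'n \<Rightarrow> real"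
    and \<phi> :: "(real^'n) \<times> real \<Rightarrow> (real^'n) \<times> real"
    and A B :: "(real^'n) set"
    and U V N :: "((real^'n) \<times> real) set"
    and x0 y0 :: "real^'n"
  assumes diffeo: "C2_diffeo U V \<phi>"
    and A_open: "open A" and B_open: "open B"
    and f_lip: "locally_lipschitz_on A f" and g_lip: "locally_lipschitz_on B g"
    and N_open: "open N" and N_sub: "N \<subseteq> U"
    and x0A: "x0 \<in> A" and y0B: "y0 \<in> B"
    and p0N: "(x0, f x0) \<in> N"
    and graphs: "\<phi> ` (N \<inter> graph_over f A) = \<phi> ` N \<inter> graph_over g B"
    and alex: "alexandrov_point f x0"
    and corr: "\<phi> (x0, f x0) = (y0, g y0)"
  shows "alexandrov_point g y0"
proof -
  obtain k where "open U" "C2_on U \<phi>" "C2_on V k" "\<phi> ` U = V"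
    and k\<phi>: "\<And>p. p \<in> U \<Longrightarrow> k (\<phi> p) = p"
    using diffeo unfolding C2_diffeo_def by blast
  have k\<phi>_N: "\<And>p. p \<in> N \<Longrightarrow> k (\<phi> p) = p"
    using k\<phi> N_sub by blast
  obtain Lf Qf where f: "quadratic_expansion f x0 Lf Qf"
    using alex alexandrov_point_iff_quadratic_expansion by blast
  obtain L\<phi> Q\<phi> where "quadratic_expansion \<phi> (x0, f x0) L\<phi> Q\<phi>"
    using C2_on_imp_quadratic_expansion[OF \<open>C2_on U \<phi>\<close> \<open>open U\<close>] p0N N_sub by blast
  from quadratic_expansion_compose[OF quadratic_expansion_Pair[OF
        bounded_linear_quadratic_expansion[OF bounded_linear_ident] f] this]
  obtain LP QP where P: "quadratic_expansion (\<lambda>x. \<phi> (x, f x)) x0 LP QP" by auto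
  note Y = quadratic_expansion_compose[OF P bounded_linear_quadratic_expansion[OF bounded_linear_fst]]
  note G = quadratic_expansion_compose[OF P bounded_linear_quadratic_expansion[OF bounded_linear_snd]]
  have "isCont f x0"
    using quadratic_expansion_imp_has_derivative[OF f] by (rule has_derivative_continuous)
  have "lipschitz_at g y0"
    using g_lip B_open y0B by (rule locally_lipschitz_on_imp_lipschitz_at)
  have "(y0, g y0) \<in> V"
    using corr p0N N_sub \<open>\<phi> ` U = V\<close> by (metis image_eqI subsetD)
  then have "lipschitz_at (\<lambda>y. fst (k (y, g y))) y0"
    using \<open>lipschitz_at g y0\<close> C2_on_differentiable[OF \<open>C2_on V k\<close>] by (intro lipschitz_at_graph_chart)
  moreover have "fst (k (y0, g y0)) = x0"
    using k\<phi>_N[OF p0N] corr by simp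
  ultimately have "\<exists>L Q. quadratic_expansion g y0 L Q"
    using quadratic_expansion_compose_local_inverse[where X="\<lambda>y. fst (k (y, g y))", OF Y G]
      graph_transition_local_inverses[OF k\<phi>_N N_open C2_diffeo_open_image[OF diffeo N_open N_sub]
        A_open B_open x0A y0B p0N corr \<open>isCont f x0\<close> lipschitz_at_imp_isCont[OF \<open>lipschitz_at g y0\<close>] graphs]
    by simp
  then show ?thesis
    using alexandrov_point_iff_quadratic_expansion by blast
qed

end
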